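(* Let $L$ be an i--lattice. If ${\rm Con}(L)$ is a Boolean algebra, then ${\rm Con}_{\mathbb{I}}(L)$ is a Boolean subalgebra of ${\rm Con}(L)$.
   Context: An i--lattice is a lattice $L$ with a unary operation $'$ such that $a''=a$ and $a\leq b$ implies $b'\leq a'$ for all $a,b\in L$. ${\rm Con}(L)$ is the lattice of lattice congruences of $L$, and ${\rm Con}_{\mathbb{I}}(L)$ is the set of lattice congruences $\theta$ that also preserve the involution, i.e. $(a,b)\in\theta$ implies $(a',b')\in\theta$ (it is a sublattice of ${\rm Con}(L)$). *)

theory Defs
  imports Main
begin

definition i_lattice :: "('a::lattice \<Rightarrow> 'a) \<Rightarrow> bool" where
  "i_lattice f \<longleftrightarrow> (\<forall>a. f (f a) = a) \<and> (\<forall>a b. a \<le> b \<longrightarrow> f b \<le> f a)"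

definition lat_con :: "('a::lattice \<times> 'a) set \<Rightarrow> bool" where
  "lat_con \<theta> \<longleftrightarrow> equiv UNIV \<theta> \<and>
     (\<forall>a b c d. (a, b) \<in> \<theta> \<and> (c, d) \<in> \<theta> \<longrightarrow>
        (inf a c, inf b d) \<in> \<theta> \<and> (sup a c, sup b d) \<in> \<theta>)"

definition Con :: "('a::lattice \<times> 'a) set set" where
  "Con = {\<theta>. lat_con \<theta>}"

definition Con_I :: "('a::lattice \<Rightarrow> 'a) \<Rightarrow> ('a \<times> 'a) set set" where
  "Con_I f = {\<theta> \<in> Con. \<forall>a b. (a, b) \<in> \<theta> \<longrightarrow> (f a, f b) \<in> \<theta>}"

definition con_meet :: "('a::lattice \<times> 'a) set \<Rightarrow> ('a \<times> 'a) set \<Rightarrow> ('a \<times> 'a) set" where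
  "con_meet \<theta> \<phi> = \<theta> \<inter> \<phi>"

definition con_join :: "('a::lattice \<times> 'a) set \<Rightarrow> ('a \<times> 'a) set \<Rightarrow> ('a \<times> 'a) set" where
  "con_join \<theta> \<phi> = \<Inter> {\<psi> \<in> Con. \<theta> \<union> \<phi> \<subseteq> \<psi>}"

definition con_complement :: "('a::lattice \<times> 'a) set \<Rightarrow> ('a \<times> 'a) set \<Rightarrow> bool" where
  "con_complement \<theta> \<phi> \<longleftrightarrow> con_meet \<theta> \<phi> = Id \<and> con_join \<theta> \<phi> = UNIV"

definition Con_boolean :: "'a::lattice itself \<Rightarrow> bool" where
  "Con_boolean _ \<longleftrightarrow>
     (\<forall>\<theta> \<in> (Con :: ('a \<times> 'a) set set). \<forall>\<phi> \<in> Con. \<forall>\<psi> \<in> Con.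
        con_meet \<theta> (con_join \<phi> \<psi>) = con_join (con_meet \<theta> \<phi>) (con_meet \<theta> \<psi>)) \<and>
     (\<forall>\<theta> \<in> (Con :: ('a \<times> 'a) set set). \<exists>\<phi> \<in> Con. con_complement \<theta> \<phi>)"

definition boolean_subalgebra_of_Con :: "('a::lattice \<times> 'a) set set \<Rightarrow> bool" where
  "boolean_subalgebra_of_Con S \<longleftrightarrow>
     S \<subseteq> Con \<and> Id \<in> S \<and> UNIV \<in> S \<and>
     (\<forall>\<theta> \<in> S. \<forall>\<phi> \<in> S. con_meet \<theta> \<phi> \<in> S \<and> con_join \<theta> \<phi> \<in> S) \<and>
     (\<forall>\<theta> \<in> S. \<forall>\<phi> \<in> Con. con_complement \<theta> \<phi> \<longrightarrow> \<phi> \<in> S)"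

end

theory Submission
  imports Defs
begin

text \<open>The involution f induces the map \<theta> \<mapsto> inv_image \<theta> f on Con(L), an involutive order
  automorphism whose fixed points are exactly the elements of Con_I(L). It therefore sends a
  complement of a fixed congruence \<theta> to another complement of \<theta>; since complements in the
  distributive lattice Con(L) are unique, every complement of \<theta> is fixed as well.\<close>

lemma i_lattice_involutive: "i_lattice f \<Longrightarrow> f (f a) = a"
  by (simp add: i_lattice_def)

lemma i_lattice_antimono: "i_lattice f \<Longrightarrow> a \<le> b \<Longrightarrow> f b \<le> f a"
  by (simp add: i_lattice_def)

lemma i_lattice_inf:
  assumes "i_lattice f"
  shows "f (inf a b) = sup (f a) (f b)"
proof (rule antisym)
  have "f (sup (f a) (f b)) \<le> inf a b"
    using i_lattice_antimono[OF assms, of "f a" "sup (f a) (f b)"]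
      i_lattice_antimono[OF assms, of "f b" "sup (f a) (f b)"]
    by (simp add: i_lattice_involutive[OF assms])
  then show "f (inf a b) \<le> sup (f a) (f b)"
    using i_lattice_antimono[OF assms] i_lattice_involutive[OF assms] by metis
  show "sup (f a) (f b) \<le> f (inf a b)"
    using i_lattice_antimono[OF assms] by simp
qed

lemma i_lattice_sup:
  assumes "i_lattice f"
  shows "f (sup a b) = inf (f a) (f b)"
  using i_lattice_inf[OF assms, of "f a" "f b"] i_lattice_involutive[OF assms] by metis

lemma lat_conI:
  assumes "\<And>a. (a, a) \<in> \<psi>"
    and "\<And>a b. (a, b) \<in> \<psi> \<Longrightarrow> (b, a) \<in> \<psi>"
    and "\<And>a b c. (a, b) \<in> \<psi> \<Longrightarrow> (b, c) \<in> \<psi> \<Longrightarrow> (a, c) \<in> \<psi>"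
    and "\<And>a b c d. (a, b) \<in> \<psi> \<Longrightarrow> (c, d) \<in> \<psi> \<Longrightarrow> (inf a c, inf b d) \<in> \<psi>"
    and "\<And>a b c d. (a, b) \<in> \<psi> \<Longrightarrow> (c, d) \<in> \<psi> \<Longrightarrow> (sup a c, sup b d) \<in> \<psi>"
  shows "lat_con \<psi>"
proof -
  have "equiv UNIV \<psi>"
  proof (rule equivI)
    show "\<psi> \<subseteq> UNIV \<times> UNIV"
      by simp
    show "refl_on UNIV \<psi>"
      using assms(1) by (auto simp: refl_on_def)
    show "sym \<psi>"
      using assms(2) by (rule symI)
    show "trans \<psi>"
      using assms(3) by (rule transI)
  qed
  then show ?thesis
    using assms(4,5) by (simp add: lat_con_def)
qed

lemma
  assumes "lat_con \<psi>"
  shows lat_con_refl: "(a, a) \<in> \<psi>"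
    and lat_con_sym: "(a, b) \<in> \<psi> \<Longrightarrow> (b, a) \<in> \<psi>"
    and lat_con_trans: "(a, b) \<in> \<psi> \<Longrightarrow> (b, c) \<in> \<psi> \<Longrightarrow> (a, c) \<in> \<psi>"
    and lat_con_inf: "(a, b) \<in> \<psi> \<Longrightarrow> (c, d) \<in> \<psi> \<Longrightarrow> (inf a c, inf b d) \<in> \<psi>"
    and lat_con_sup: "(a, b) \<in> \<psi> \<Longrightarrow> (c, d) \<in> \<psi> \<Longrightarrow> (sup a c, sup b d) \<in> \<psi>"
proof -
  have equiv: "equiv UNIV \<psi>"
    using assms by (simp add: lat_con_def)
  show "(a, a) \<in> \<psi>"
    using equiv by (simp add: equiv_def refl_on_def)
  show "(a, b) \<in> \<psi> \<Longrightarrow> (b, a) \<in> \<psi>"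
    using equiv by (auto simp: equiv_def dest: symD)
  show "(a, b) \<in> \<psi> \<Longrightarrow> (b, c) \<in> \<psi> \<Longrightarrow> (a, c) \<in> \<psi>"
    using equiv by (auto simp: equiv_def dest: transD)
  show "(a, b) \<in> \<psi> \<Longrightarrow> (c, d) \<in> \<psi> \<Longrightarrow> (inf a c, inf b d) \<in> \<psi>"
    and "(a, b) \<in> \<psi> \<Longrightarrow> (c, d) \<in> \<psi> \<Longrightarrow> (sup a c, sup b d) \<in> \<psi>"
    using assms by (simp_all add: lat_con_def)
qed

lemma Id_in_Con: "Id \<in> Con"
  unfolding Con_def by (auto intro: lat_conI)

lemma UNIV_in_Con: "UNIV \<in> Con"
  unfolding Con_def by (auto intro: lat_conI)

lemma con_meet_in_Con: "\<theta> \<in> Con \<Longrightarrow> \<phi> \<in> Con \<Longrightarrow> con_meet \<theta> \<phi> \<in> Con"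
  unfolding Con_def con_meet_def
  by (auto intro!: lat_conI intro: lat_con_refl lat_con_sym lat_con_trans lat_con_inf lat_con_sup)

lemma in_con_join: "(a, b) \<in> con_join \<theta> \<phi> \<longleftrightarrow> (\<forall>\<psi> \<in> Con. \<theta> \<union> \<phi> \<subseteq> \<psi> \<longrightarrow> (a, b) \<in> \<psi>)"
  by (auto simp: con_join_def)

lemma con_join_in_Con: "con_join \<theta> \<phi> \<in> Con"
  unfolding Con_def mem_Collect_eq
  by (rule lat_conI; unfold in_con_join Con_def mem_Collect_eq)
    (blast intro: lat_con_refl lat_con_sym lat_con_trans lat_con_inf lat_con_sup)+

lemma con_join_least: "\<psi> \<in> Con \<Longrightarrow> \<theta> \<union> \<phi> \<subseteq> \<psi> \<Longrightarrow> con_join \<theta> \<phi> \<subseteq> \<psi>"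
  by (auto simp: con_join_def)

lemma con_join_upper: "\<theta> \<union> \<phi> \<subseteq> con_join \<theta> \<phi>"
  by (auto simp: con_join_def)

lemma con_join_Id: "\<chi> \<in> Con \<Longrightarrow> con_join Id \<chi> = \<chi>"
  using con_join_least[of \<chi> Id \<chi>] con_join_upper[of Id \<chi>]
  by (auto simp: Con_def intro: lat_con_refl)

lemma con_complement_unique:
  fixes \<theta> \<phi> \<phi>' :: "('a::lattice \<times> 'a) set"
  assumes distrib: "\<And>\<theta> \<phi> \<psi> :: ('a \<times> 'a) set. \<theta> \<in> Con \<Longrightarrow> \<phi> \<in> Con \<Longrightarrow> \<psi> \<in> Con \<Longrightarrow>
      con_meet \<theta> (con_join \<phi> \<psi>) = con_join (con_meet \<theta> \<phi>) (con_meet \<theta> \<psi>)"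
    and "\<theta> \<in> Con" "\<phi> \<in> Con" "\<phi>' \<in> Con"
    and "con_complement \<theta> \<phi>" "con_complement \<theta> \<phi>'"
  shows "\<phi> \<subseteq> \<phi>'"
proof -
  have "\<phi> = con_meet \<phi> (con_join \<theta> \<phi>')"
    using assms(6) by (simp add: con_complement_def con_meet_def)
  also have "\<dots> = con_join (con_meet \<phi> \<theta>) (con_meet \<phi> \<phi>')"
    by (rule distrib[OF assms(3,2,4)])
  also have "con_meet \<phi> \<theta> = Id"
    using assms(5) by (auto simp: con_complement_def con_meet_def)
  also have "con_join Id (con_meet \<phi> \<phi>') = con_meet \<phi> \<phi>'"
    using con_join_Id con_meet_in_Con assms(3,4) by blast
  finally show ?thesis
    by (auto simp: con_meet_def)
qed

lemma lat_con_inv_image: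
  assumes "i_lattice f" and "lat_con \<psi>"
  shows "lat_con (inv_image \<psi> f)"
  by (rule lat_conI)
    (auto simp: i_lattice_inf[OF assms(1)] i_lattice_sup[OF assms(1)]
      intro: lat_con_refl[OF assms(2)] lat_con_sym[OF assms(2)] lat_con_trans[OF assms(2)]
        lat_con_inf[OF assms(2)] lat_con_sup[OF assms(2)])

lemma inv_image_in_Con: "i_lattice f \<Longrightarrow> \<psi> \<in> Con \<Longrightarrow> inv_image \<psi> f \<in> Con"
  by (simp add: Con_def lat_con_inv_image)

lemma inv_image_involutive: "i_lattice f \<Longrightarrow> inv_image (inv_image \<psi> f) f = \<psi>"
  by (auto simp: inv_image_def i_lattice_involutive)

lemma inv_image_mono: "\<theta> \<subseteq> \<psi> \<Longrightarrow> inv_image \<theta> f \<subseteq> inv_image \<psi> f"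
  by auto

lemma inv_image_Id: "i_lattice f \<Longrightarrow> inv_image Id f = Id"
  by (auto simp: inv_image_def) (metis i_lattice_involutive)

lemma subset_inv_image_iff:
  assumes "i_lattice f"
  shows "\<theta> \<subseteq> inv_image \<psi> f \<longleftrightarrow> inv_image \<theta> f \<subseteq> \<psi>"
  using inv_image_mono[of _ _ f] inv_image_involutive[OF assms] by metis

lemma inv_image_con_join:
  assumes "i_lattice f"
  shows "inv_image (con_join \<theta> \<phi>) f = con_join (inv_image \<theta> f) (inv_image \<phi> f)"
proof (rule antisym)
  let ?dual_join = "con_join (inv_image \<theta> f) (inv_image \<phi> f)"
  have "inv_image (\<theta> \<union> \<phi>) f = inv_image \<theta> f \<union> inv_image \<phi> f"
    by auto
  then have "\<theta> \<union> \<phi> \<subseteq> inv_image ?dual_join f"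
    using con_join_upper by (simp add: subset_inv_image_iff[OF assms])
  then have "con_join \<theta> \<phi> \<subseteq> inv_image ?dual_join f"
    by (intro con_join_least inv_image_in_Con[OF assms] con_join_in_Con)
  then show "inv_image (con_join \<theta> \<phi>) f \<subseteq> ?dual_join"
    unfolding subset_inv_image_iff[OF assms] .
  show "?dual_join \<subseteq> inv_image (con_join \<theta> \<phi>) f"
    using con_join_upper[of \<theta> \<phi>]
    by (intro con_join_least inv_image_in_Con[OF assms] con_join_in_Con) auto
qed

lemma con_complement_inv_image:
  assumes "i_lattice f" and "con_complement \<theta> \<phi>"
  shows "con_complement (inv_image \<theta> f) (inv_image \<phi> f)"
proof -
  have "inv_image \<theta> f \<inter> inv_image \<phi> f = inv_image (\<theta> \<inter> \<phi>) f"
    and "inv_image UNIV f = UNIV"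
    by auto
  then show ?thesis
    using assms by (simp add: con_complement_def con_meet_def inv_image_Id
        flip: inv_image_con_join[OF assms(1)])
qed

lemma Con_I_iff_fixed:
  assumes "i_lattice f"
  shows "\<theta> \<in> Con_I f \<longleftrightarrow> \<theta> \<in> Con \<and> inv_image \<theta> f = \<theta>"
proof -
  have "\<theta> \<in> Con_I f \<longleftrightarrow> \<theta> \<in> Con \<and> \<theta> \<subseteq> inv_image \<theta> f"
    by (auto simp: Con_I_def)
  moreover have "\<theta> \<subseteq> inv_image \<theta> f \<longleftrightarrow> inv_image \<theta> f = \<theta>"
    using subset_inv_image_iff[OF assms, of \<theta> \<theta>] by auto
  ultimately show ?thesis
    by blast
qed

lemma Con_I_closed_under_complement:
  fixes f :: "'a::lattice \<Rightarrow> 'a"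
  assumes "i_lattice f"
    and distrib: "\<And>\<theta> \<phi> \<psi> :: ('a \<times> 'a) set. \<theta> \<in> Con \<Longrightarrow> \<phi> \<in> Con \<Longrightarrow> \<psi> \<in> Con \<Longrightarrow>
      con_meet \<theta> (con_join \<phi> \<psi>) = con_join (con_meet \<theta> \<phi>) (con_meet \<theta> \<psi>)"
    and "\<theta> \<in> Con_I f" "\<phi> \<in> Con" "con_complement \<theta> \<phi>"
  shows "\<phi> \<in> Con_I f"
proof -
  have "\<theta> \<in> Con" and "inv_image \<theta> f = \<theta>"
    using assms(3) Con_I_iff_fixed[OF assms(1)] by blast+
  then have "con_complement \<theta> (inv_image \<phi> f)"
    using con_complement_inv_image[OF assms(1,5)] by simp
  then have "\<phi> \<subseteq> inv_image \<phi> f"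
    using con_complement_unique[OF distrib] \<open>\<theta> \<in> Con\<close> assms(4,5)
      inv_image_in_Con[OF assms(1,4)] by blast
  then show ?thesis
    using assms(4) by (auto simp: Con_I_def)
qed

theorem proposition4p8:
  fixes f :: "'a::lattice \<Rightarrow> 'a"
  assumes "i_lattice f"
    and "Con_boolean TYPE('a)"
  shows "boolean_subalgebra_of_Con (Con_I f)"
proof -
  have distrib: "\<And>\<theta> \<phi> \<psi> :: ('a \<times> 'a) set. \<theta> \<in> Con \<Longrightarrow> \<phi> \<in> Con \<Longrightarrow> \<psi> \<in> Con \<Longrightarrow>
      con_meet \<theta> (con_join \<phi> \<psi>) = con_join (con_meet \<theta> \<phi>) (con_meet \<theta> \<psi>)"
    using assms(2) by (simp add: Con_boolean_def)
  have "Con_I f \<subseteq> Con"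
    by (auto simp: Con_I_def)
  moreover have "Id \<in> Con_I f" "UNIV \<in> Con_I f"
    using Id_in_Con UNIV_in_Con
    by (auto simp: Con_I_iff_fixed[OF assms(1)] inv_image_Id[OF assms(1)])
  moreover have "con_meet \<theta> \<phi> \<in> Con_I f" "con_join \<theta> \<phi> \<in> Con_I f"
    if "\<theta> \<in> Con_I f" "\<phi> \<in> Con_I f" for \<theta> \<phi>
  proof -
    have "\<theta> \<in> Con" "\<phi> \<in> Con" "inv_image \<theta> f = \<theta>" "inv_image \<phi> f = \<phi>"
      using that by (simp_all add: Con_I_iff_fixed[OF assms(1)])
    moreover have "inv_image (con_meet \<theta> \<phi>) f = con_meet (inv_image \<theta> f) (inv_image \<phi> f)"
      by (auto simp: con_meet_def)
    ultimately show "con_meet \<theta> \<phi> \<in> Con_I f" and "con_join \<theta> \<phi> \<in> Con_I f"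
      by (simp_all add: Con_I_iff_fixed[OF assms(1)] inv_image_con_join[OF assms(1)]
          con_meet_in_Con con_join_in_Con)
  qed
  ultimately show ?thesis
    unfolding boolean_subalgebra_of_Con_def
    using Con_I_closed_under_complement[OF assms(1) distrib] by simp
qed

end
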